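(* Let $p$ be a prime number and let $a$ be an integer not divisible by $p$. Then the sequence $$\left(\vartheta_p\left(\sum_{k=1}^{n}\left(\frac{1}{a^k}+\frac{1}{(p-a)^k}\right)\frac{p^k}{k}\right)\right)_{n\geq 1}$$ is unbounded from above.
   Context: For a prime $p$ and a rational number $r$, $\vartheta_p(r)$ denotes the $p$-adic valuation of $r$ (with $\vartheta_p(0)=+\infty$). *)

theory Defs
  imports "HOL-Computational_Algebra.Computational_Algebra" "HOL-Library.Extended_Real"
begin

definition padic_val_rat :: "nat \<Rightarrow> rat \<Rightarrow> ereal" where
  "padic_val_rat p r =
     (if r = 0 then \<infinity>
      else (case quotient_of r of (n, d) \<Rightarrow>
              ereal (real_of_int (int (multiplicity (int p) n) - int (multiplicity (int p) d)))))"

end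

theory Submission
  imports Defs
begin

(* With x = p/a and y = p/(p - a) = x/(x - 1), the n-th sum is sum_{k=1..n} (x^k + y^k)/k, a
   truncation of -log(1 - x) - log(1 - y), which vanishes identically because (1 - x)(1 - y) = 1.
   Accordingly the polynomial P_n = (1 - X)^n sum_{k=1..n} (X^k + (X/(X - 1))^k)/k has no
   monomials of degree <= n, as follows from the differential equation
   (1 - X) P_n' + n P_n = (-X)^n - X^n (1 - X)^n.  If n <= p^m, all coefficients of p^m P_n are
   p-integral, because k <= p^m implies v_p(k) <= m.  Hence for n = p^m the sum P_n(x)/(1 - x)^n,
   where x = p/a and 1 - x is a p-adic unit, has valuation at least n + 1 - m. *)

(* q lies in p^N Z_(p), i.e. q = 0 or v_p(q) >= N. *)
definition padic_dvd :: "nat \<Rightarrow> nat \<Rightarrow> rat \<Rightarrow> bool" where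
  "padic_dvd p N q \<longleftrightarrow> (\<exists>r s. \<not> int p dvd s \<and> q = of_int r * of_nat p ^ N / of_int s)"

lemma padic_dvdE:
  assumes "padic_dvd p N q"
  obtains r s where "\<not> int p dvd s" "s \<noteq> 0" "q = of_int r * of_nat p ^ N / of_int s"
  using assms unfolding padic_dvd_def by fastforce

lemma padic_dvd_of_int:
  assumes "prime p"
  shows "padic_dvd p 0 (of_int r)"
  unfolding padic_dvd_def
  by (rule exI[of _ r], rule exI[of _ 1]) (use prime_gt_1_nat[OF assms] in simp)

lemma padic_dvd_0:
  assumes "prime p"
  shows "padic_dvd p N 0"
  unfolding padic_dvd_def
  by (rule exI[of _ 0], rule exI[of _ 1]) (use prime_gt_1_nat[OF assms] in simp)

lemma padic_dvd_prime_power: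
  assumes "prime p"
  shows "padic_dvd p N (of_nat p ^ N)"
  unfolding padic_dvd_def
  by (rule exI[of _ 1], rule exI[of _ 1]) (use prime_gt_1_nat[OF assms] in simp)

lemma padic_dvd_add:
  assumes "prime p" "padic_dvd p N x" "padic_dvd p N y"
  shows "padic_dvd p N (x + y)"
proof -
  obtain r s where x: "\<not> int p dvd s" "s \<noteq> 0" "x = of_int r * of_nat p ^ N / of_int s"
    using assms(2) by (rule padic_dvdE)
  obtain r' s' where y: "\<not> int p dvd s'" "s' \<noteq> 0" "y = of_int r' * of_nat p ^ N / of_int s'"
    using assms(3) by (rule padic_dvdE)
  have "\<not> int p dvd s * s'"
    using x y assms(1) by (simp add: prime_dvd_mult_iff)
  moreover have "x + y = of_int (r * s' + r' * s) * of_nat p ^ N / of_int (s * s')"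
    using x y by (simp add: field_simps)
  ultimately show ?thesis
    unfolding padic_dvd_def by blast
qed

lemma padic_dvd_sum:
  assumes "prime p" "\<And>i. i \<in> A \<Longrightarrow> padic_dvd p N (f i)"
  shows "padic_dvd p N (sum f A)"
  using assms(2)
  by (induction A rule: infinite_finite_induct) (simp_all add: padic_dvd_0 padic_dvd_add assms(1))

lemma padic_dvd_mult:
  assumes "prime p" "padic_dvd p N x" "padic_dvd p M y"
  shows "padic_dvd p (N + M) (x * y)"
proof -
  obtain r s where x: "\<not> int p dvd s" "s \<noteq> 0" "x = of_int r * of_nat p ^ N / of_int s"
    using assms(2) by (rule padic_dvdE)
  obtain r' s' where y: "\<not> int p dvd s'" "s' \<noteq> 0" "y = of_int r' * of_nat p ^ M / of_int s'"
    using assms(3) by (rule padic_dvdE)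
  have "\<not> int p dvd s * s'"
    using x y assms(1) by (simp add: prime_dvd_mult_iff)
  moreover have "x * y = of_int (r * r') * of_nat p ^ (N + M) / of_int (s * s')"
    unfolding x(3) y(3) by (simp add: power_add)
  ultimately show ?thesis
    unfolding padic_dvd_def by blast
qed

lemma padic_dvd_divide:
  assumes "prime p" "padic_dvd p N x" "\<not> int p dvd s"
  shows "padic_dvd p N (x / of_int s)"
proof -
  have "padic_dvd p 0 (1 / of_int s)"
    unfolding padic_dvd_def by (rule exI[of _ 1], rule exI[of _ s]) (use assms(3) in simp)
  then show ?thesis
    using padic_dvd_mult[OF assms(1,2)] by fastforce
qed

lemma padic_dvd_mono:
  assumes "padic_dvd p N x" "M \<le> N"
  shows "padic_dvd p M x"
proof -
  obtain r s where x: "\<not> int p dvd s" "x = of_int r * of_nat p ^ N / of_int s"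
    using assms(1) by (rule padic_dvdE)
  have "x = of_int (r * int p ^ (N - M)) * of_nat p ^ M / of_int s"
    using assms(2) by (simp add: x flip: power_add)
  then show ?thesis
    using x unfolding padic_dvd_def by blast
qed

lemma padic_dvd_prime_power_div:
  assumes "prime p" "1 \<le> k" "k \<le> p ^ m"
  shows "padic_dvd p 0 (of_nat p ^ m / of_nat k)"
proof -
  obtain e s where k: "k = p ^ e * s" "\<not> p dvd s"
    using multiplicity_decompose'[of k p] assms by (metis not_prime_unit not_one_le_zero)
  have "p ^ e \<le> k"
    using assms k(1) by (intro dvd_imp_le) (simp_all add: prime_gt_0_nat)
  then have "p ^ e \<le> p ^ m"
    using assms(3) by linarith
  then have "e \<le> m"
    using assms(1) by (meson power_le_imp_le_exp prime_gt_1_nat)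
  then have "(of_nat p ^ m :: rat) = of_nat p ^ (m - e) * of_nat p ^ e"
    by (simp flip: power_add)
  moreover have "s \<noteq> 0" "p \<noteq> 0"
    using k(2) assms(1) by (auto intro!: Nat.gr0I)
  ultimately have "of_nat p ^ m / of_nat k
      = (of_int 1 * of_nat p ^ (m - e) / of_int (int s) :: rat)"
    using k(1) by simp
  moreover have "\<not> int p dvd int s"
    using k by simp
  ultimately have "padic_dvd p (m - e) (of_nat p ^ m / of_nat k)"
    unfolding padic_dvd_def by blast
  then show ?thesis
    by (rule padic_dvd_mono) simp
qed

lemma padic_dvd_Ints:
  assumes "prime p" "x \<in> \<int>"
  shows "padic_dvd p 0 x"
  using assms(2) by (auto elim!: Ints_cases intro: padic_dvd_of_int assms(1))

lemma padic_val_rat_ge_if_padic_dvd: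
  assumes "prime p" "padic_dvd p N q"
  shows "ereal (real N) \<le> padic_val_rat p q"
proof (cases "q = 0")
  case True
  then show ?thesis
    by (simp add: padic_val_rat_def)
next
  case False
  obtain r s where s: "\<not> int p dvd s" "s \<noteq> 0"
    and q: "q = of_int r * of_nat p ^ N / of_int s"
    using assms(2) by (rule padic_dvdE)
  obtain n d where nd: "quotient_of q = (n, d)"
    by (cases "quotient_of q") auto
  have "d > 0" "coprime n d" "q = of_int n / of_int d"
    using nd quotient_of_denom_pos quotient_of_coprime quotient_of_div by blast+
  then have "of_int (n * s) = (of_int (r * int p ^ N * d) :: rat)"
    using q s(2) by (simp add: field_simps)
  then have eq: "n * s = r * int p ^ N * d"
    by (rule of_int_eq_iff [THEN iffD1])
  have p: "prime (int p)"
    using assms(1) by simp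
  have d: "\<not> int p dvd d"
  proof
    assume "int p dvd d"
    then have "\<not> int p dvd n"
      using \<open>coprime n d\<close> p by (meson coprime_common_divisor not_prime_unit)
    then have "\<not> int p dvd n * s"
      using s(1) p by (simp add: prime_dvd_mult_iff)
    with eq \<open>int p dvd d\<close> show False
      by simp
  qed
  have "int p ^ N dvd n * s"
    using eq by simp
  moreover have "coprime (int p ^ N) s"
    using s(1) p by (simp add: prime_imp_coprime)
  ultimately have "int p ^ N dvd n"
    using coprime_dvd_mult_left_iff by blast
  moreover have "n \<noteq> 0"
    using False \<open>q = of_int n / of_int d\<close> by auto
  ultimately have "multiplicity (int p) n \<ge> N"
    using p by (intro multiplicity_geI) (auto simp: not_prime_unit)
  then show ?thesis
    using False nd d by (simp add: padic_val_rat_def not_dvd_imp_multiplicity_0)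
qed

definition log_sum_poly :: "nat \<Rightarrow> 'a::field_char_0 poly" where
  "log_sum_poly n =
     (\<Sum>k=1..n. smult (1 / of_nat k)
        ([:0, 1:] ^ k * [:1, -1:] ^ n + [:0, -1:] ^ k * [:1, -1:] ^ (n - k)))"

lemma log_sum_poly_Suc:
  "log_sum_poly (Suc n) = [:1, -1:] * (log_sum_poly n :: 'a::field_char_0 poly)
     + smult (1 / of_nat (Suc n)) ([:0, 1:] ^ Suc n * [:1, -1:] ^ Suc n + [:0, -1:] ^ Suc n)"
proof -
  have "[:1, -1:] * (log_sum_poly n :: 'a poly) =
     (\<Sum>k=1..n. smult (1 / of_nat k)
        ([:0, 1:] ^ k * [:1, -1:] ^ Suc n + [:0, -1:] ^ k * [:1, -1:] ^ (Suc n - k)))"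
    unfolding log_sum_poly_def sum_distrib_left
    by (intro sum.cong refl) (simp add: Suc_diff_le algebra_simps)
  then show ?thesis
    unfolding log_sum_poly_def[of "Suc n"] by simp
qed

lemma pderiv_log_sum_poly:
  "[:1, -1:] * pderiv (log_sum_poly n) + smult (of_nat n) (log_sum_poly n :: 'a::field_char_0 poly)
     = [:0, -1:] ^ n - [:0, 1:] ^ n * [:1, -1:] ^ n"
proof (induction n)
  case 0
  then show ?case by (simp add: log_sum_poly_def)
next
  case (Suc n)
  define X W P :: "'a poly" where "X = [:0, 1:]" "W = [:1, -1:]" "P = log_sum_poly n"
  define T D :: "'a poly"
    where "T = X ^ Suc n * W ^ Suc n + (- X) ^ Suc n"
      and "D = X ^ n * W ^ Suc n - X ^ Suc n * W ^ n - (- X) ^ n"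
  define c :: 'a where "c = 1 / of_nat (Suc n)"
  have W: "W = 1 - X" and minus_X: "[:0, -1:] = - X" and dX: "pderiv X = 1" and dW: "pderiv W = -1"
    by (simp_all add: X_W_P_def one_pCons pderiv_pCons)
  have c: "c * of_nat (Suc n) = 1" "of_nat (Suc n) * c = 1"
    by (simp_all add: c_def del: of_nat_Suc)
  have step: "log_sum_poly (Suc n) = W * P + smult c T"
    unfolding log_sum_poly_Suc X_W_P_def T_def D_def c_def by simp
  have "pderiv T = smult (of_nat (Suc n)) D"
    unfolding T_def D_def
    by (simp only: pderiv_mult pderiv_add pderiv_power_Suc pderiv_minus dX dW)
       (simp add: smult_add_right smult_diff_right algebra_simps)
  then have "pderiv (log_sum_poly (Suc n)) = W * pderiv P - P + D"
    unfolding step by (simp only: pderiv_add pderiv_mult pderiv_smult smult_smult dW c) simp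
  then have "W * pderiv (log_sum_poly (Suc n)) + smult (of_nat (Suc n)) (log_sum_poly (Suc n))
      = W * (W * pderiv P - P + D) + smult (of_nat (Suc n)) (W * P + smult c T)"
    by (simp only: step)
  also have "\<dots> = W * (W * pderiv P + smult (of_nat n) P) + W * D + T"
    by (simp only: smult_add_right smult_smult c smult_one) (simp add: algebra_simps smult_add_left)
  also have "\<dots> = (- X) ^ Suc n - X ^ Suc n * W ^ Suc n"
    unfolding Suc.IH[folded X_W_P_def, unfolded minus_X] unfolding T_def D_def W
    by (simp add: algebra_simps)
  finally show ?case
    by (simp add: X_W_P_def)
qed

lemma pCons_0_power: "[:0, c:] ^ n = monom (c ^ n) n"
  using monom_power[of c 1 n] by (simp add: monom_Suc monom_0)

lemma coeff_log_sum_poly_eq_0: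
  assumes "j \<le> n"
  shows "coeff (log_sum_poly n :: 'a::field_char_0 poly) j = 0"
  using assms
proof (induction j)
  case 0
  then show ?case
    by (simp add: poly_0_coeff_0 [symmetric] log_sum_poly_def poly_sum)
next
  case (Suc j)
  \<comment> \<open>coefficient j of the differential equation: (j + 1) c_(j+1) = (j - n) c_j\<close>
  have "coeff ([:1, -1:] * pderiv (log_sum_poly n) + smult (of_nat n) (log_sum_poly n :: 'a poly)) j
        = coeff ([:0, -1:] ^ n - [:0, 1:] ^ n * [:1, -1:] ^ n :: 'a poly) j"
    by (simp only: pderiv_log_sum_poly)
  then have "of_nat (Suc j) * coeff (log_sum_poly n :: 'a poly) (Suc j) = 0"
    using Suc by (cases j) (simp_all add: coeff_pderiv pCons_0_power coeff_monom_mult del: of_nat_Suc)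
  then show ?case
    by (simp del: of_nat_Suc)
qed

lemma poly_log_sum_poly:
  assumes "x \<noteq> 1"
  shows "poly (log_sum_poly n) x = (1 - x) ^ n * (\<Sum>k=1..n. (x ^ k + (x / (x - 1)) ^ k) / of_nat k)"
proof -
  have "(1 - x) ^ n * (x / (x - 1)) ^ k = (- x) ^ k * (1 - x) ^ (n - k)" if "k \<le> n" for k
  proof -
    have "(1 - x) ^ n = (1 - x) ^ k * (1 - x) ^ (n - k)"
      using that by (simp flip: power_add)
    moreover have "(1 - x) * (x / (x - 1)) = - x"
      using assms by (simp add: field_simps)
    then have "(1 - x) ^ k * (x / (x - 1)) ^ k = (- x) ^ k"
      by (metis power_mult_distrib)
    ultimately show ?thesis
      by simp
  qed
  then show ?thesis
    unfolding log_sum_poly_def poly_sum sum_distrib_left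
    by (intro sum.cong refl) (simp add: algebra_simps add_divide_distrib)
qed

lemma coeff_mult_in_Ints:
  fixes p q :: "'a::comm_ring_1 poly"
  assumes "\<And>i. coeff p i \<in> \<int>" "\<And>i. coeff q i \<in> \<int>"
  shows "coeff (p * q) j \<in> \<int>"
  unfolding coeff_mult using assms by (intro Ints_sum Ints_mult)

lemma coeff_power_in_Ints:
  fixes p :: "'a::comm_ring_1 poly"
  assumes "\<And>i. coeff p i \<in> \<int>"
  shows "coeff (p ^ k) j \<in> \<int>"
  using assms by (induction k arbitrary: j) (simp_all add: coeff_1 coeff_mult_in_Ints)

lemma padic_dvd_coeff_log_sum_poly:
  assumes "prime p" "n \<le> p ^ m"
  shows "padic_dvd p 0 (of_nat p ^ m * coeff (log_sum_poly n) j)"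
proof -
  have int_X: "coeff [:0, c:] i \<in> \<int>" "coeff [:1, c:] i \<in> \<int>" if "c \<in> \<int>" for c :: rat and i
    using that by (simp_all add: coeff_pCons split: nat.split)
  have "coeff ([:0, 1:] ^ k * [:1, -1:] ^ n + [:0, -1:] ^ k * [:1, -1:] ^ (n - k) :: rat poly) j
      \<in> \<int>" for k
    unfolding coeff_add
    by (intro Ints_add coeff_mult_in_Ints coeff_power_in_Ints int_X Ints_minus Ints_1)
  moreover have "of_nat p ^ m * coeff (log_sum_poly n :: rat poly) j =
    (\<Sum>k=1..n. (of_nat p ^ m / of_nat k) *
       coeff ([:0, 1:] ^ k * [:1, -1:] ^ n + [:0, -1:] ^ k * [:1, -1:] ^ (n - k)) j)"
    by (simp add: log_sum_poly_def coeff_sum sum_distrib_left)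
  moreover have "padic_dvd p (0 + 0) \<dots>"
    using assms
    by (intro padic_dvd_sum padic_dvd_mult padic_dvd_prime_power_div padic_dvd_Ints calculation) auto
  ultimately show ?thesis
    by simp
qed

lemma padic_dvd_log_sum:
  fixes p :: nat and a :: int
  assumes p: "prime p" and a: "\<not> int p dvd a"
  shows "padic_dvd p (p ^ m + 1 - m)
    (\<Sum>k=1..p ^ m. (1 / of_int a ^ k + 1 / of_int (int p - a) ^ k) * of_nat p ^ k / of_nat k)"
    (is "padic_dvd p _ ?S")
proof -
  define n where "n = p ^ m"
  have "m \<le> n"
    unfolding n_def using prime_ge_2_nat[OF p] by simp
  define x :: rat where "x = of_nat p / of_int a"
  have "a \<noteq> 0" "a \<noteq> int p"
    using a by auto
  then have x: "x \<noteq> 1" "x / (x - 1) = of_nat p / of_int (int p - a)"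
    "1 - x = of_int (a - int p) / of_int a"
    by (auto simp: x_def field_simps)
  have a_minus_p: "\<not> int p dvd a - int p"
    using a by (metis diff_add_cancel dvd_add dvd_refl)
  have p_int: "prime (int p)"
    using p by simp
  have "?S = (\<Sum>k=1..n. (x ^ k + (x / (x - 1)) ^ k) / of_nat k)"
    unfolding x(2) x_def n_def using \<open>a \<noteq> 0\<close>
    by (intro sum.cong refl) (simp add: power_divide field_simps)
  also have "\<dots> = poly (log_sum_poly n) x * of_int (a ^ n) / of_int ((a - int p) ^ n)"
    using \<open>a \<noteq> 0\<close> \<open>a \<noteq> int p\<close> by (simp add: poly_log_sum_poly x power_divide)
  finally have S: "?S = \<dots>" .
  have "padic_dvd p (p ^ m + 1 - m) (coeff (log_sum_poly n) j * x ^ j)" for j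
  proof (cases "j \<le> n")
    case True
    then show ?thesis
      by (simp add: coeff_log_sum_poly_eq_0 padic_dvd_0 p)
  next
    case False
    then have "coeff (log_sum_poly n) j * x ^ j
        = of_nat p ^ m * coeff (log_sum_poly n) j * of_nat p ^ (j - m) / of_int (a ^ j)"
      using \<open>m \<le> n\<close> p unfolding x_def by (simp add: power_divide flip: power_add)
    moreover have "padic_dvd p (0 + (j - m)) \<dots>"
      using a p unfolding n_def
      by (intro padic_dvd_divide padic_dvd_mult padic_dvd_coeff_log_sum_poly padic_dvd_prime_power)
        (auto dest: prime_dvd_power[OF p_int])
    ultimately show ?thesis
      using False unfolding n_def by (auto elim: padic_dvd_mono)
  qed
  then have "padic_dvd p (p ^ m + 1 - m + 0) (poly (log_sum_poly n) x * of_int (a ^ n))"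
    unfolding poly_altdef by (intro padic_dvd_mult padic_dvd_sum padic_dvd_of_int p)
  then show ?thesis
    unfolding S using p a_minus_p by (intro padic_dvd_divide) (auto dest: prime_dvd_power[OF p_int])
qed

theorem theorem3:
  fixes p :: nat and a :: int
  assumes "prime p" and "\<not> int p dvd a"
  shows "\<forall>M::real. \<exists>n::nat. n \<ge> 1 \<and>
           padic_val_rat p (\<Sum>k=1..n. (1 / of_int a ^ k + 1 / of_int (int p - a) ^ k)
                                       * of_nat p ^ k / of_nat k) > ereal M"
proof
  fix M :: real
  obtain m :: nat where "M < m"
    using reals_Archimedean2 by blast
  define n where "n = p ^ Suc m"
  have "n \<ge> 1"
    unfolding n_def using prime_gt_0_nat[OF assms(1)] by simp
  have "2 * Suc m \<le> 2 ^ Suc m"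
    using less_exp[of m] by (simp del: less_exp)
  also have "\<dots> \<le> n"
    unfolding n_def using prime_ge_2_nat[OF assms(1)] by (intro power_mono) simp_all
  finally have "m < n + 1 - Suc m"
    by simp
  then have "ereal M < ereal (real (n + 1 - Suc m))"
    using \<open>M < m\<close> by simp
  also have "\<dots> \<le> padic_val_rat p
      (\<Sum>k=1..n. (1 / of_int a ^ k + 1 / of_int (int p - a) ^ k) * of_nat p ^ k / of_nat k)"
    unfolding n_def by (intro padic_val_rat_ge_if_padic_dvd padic_dvd_log_sum assms)
  finally show "\<exists>n::nat. n \<ge> 1 \<and>
           padic_val_rat p (\<Sum>k=1..n. (1 / of_int a ^ k + 1 / of_int (int p - a) ^ k)
                                       * of_nat p ^ k / of_nat k) > ereal M"
    using \<open>n \<ge> 1\<close> by blast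
qed

end
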